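(* Let $M,b,\gamma$ be positive constants and $M(\delta)=M\exp(b/\delta^{\gamma})$ for $\delta\in(0,\tfrac{\pi}{2})$. Let $\{p_0,p_1,\ldots\}$ be a sequence of complex numbers. If $P_1$ and $P_2$ are functions analytic and single-valued in $S(-\tfrac{\pi}{2},\tfrac{\pi}{2})$ such that for $j=1,2$ there exist positive constants $a_j,\sigma_j,K_j$ (independent of $z,n,\delta$) with $$\Big|P_j(z)-\sum_{k=0}^{n-1}\frac{p_k}{z^{k+1}}\Big|\le K_j\,M(\delta)\,\frac{n!}{a_j^n|z|^{n+1}}$$ for every $\delta\in(0,\tfrac{\pi}{2})$, every integer $n\ge0$, and every $z\in S(-\tfrac{\pi}{2}+\delta,\tfrac{\pi}{2}-\delta)$ with $|z|>\sigma_j$, then $P_1\equiv P_2$ on $S(-\tfrac{\pi}{2},\tfrac{\pi}{2})$.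
   Context: For $\alpha<\beta$, $S(\alpha,\beta)=\{z\in\mathbb{C}:0<|z|<\infty,\ \alpha<\arg z<\beta\}$. *)

theory Defs
  imports "HOL-Complex_Analysis.Complex_Analysis"
begin

text \<open>The argument is the principal one (Arg, values in (-pi,pi]); this is adequate for
  all sectors used here, which lie within (-pi/2, pi/2).\<close>
definition sector :: "real \<Rightarrow> real \<Rightarrow> complex set" where
  "sector \<alpha> \<beta> = {z. z \<noteq> 0 \<and> \<alpha> < Arg z \<and> Arg z < \<beta>}"

definition Mdelta :: "real \<Rightarrow> real \<Rightarrow> real \<Rightarrow> real \<Rightarrow> real" where
  "Mdelta M b \<gamma> \<delta> = M * exp (b / \<delta> powr \<gamma>)"

end

(* If P1 and P2 have the same expansion, f = P1 - P2 obeys the remainder bounds with all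
   coefficients zero. Truncating at n \<approx> a |z| / e gives |f z| \<le> C exp (b / \<delta>^\<gamma> - a |z| / e)
   in the sector |arg z| < pi/2 - \<delta>. In the variable w = ln z, letting \<delta> shrink like
   exp (-\<beta> Re w) with \<beta> \<gamma> \<le> 1/2 keeps the factor exp (b / \<delta>^\<gamma>) negligible, so
   |f (exp w)| \<le> C exp (-\<alpha> exp (Re w)) on a strip bent inwards by the map w - exp (-\<beta> w).
   On the part of this bent strip with u0 < Re w < U, the maximum modulus principle applied
   to f (exp w) exp (-H w), where H w = c + \<alpha>/pi (\<phi> w - U) exp (\<phi> w) and \<phi> w = w - exp (-\<beta> w),
   bounds f at real points by a quantity tending to 0 as U \<rightarrow> \<infinity>. Thus f vanishes on a ray,
   hence on the whole half plane. *)

theory Submission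
  imports Defs "HOL-Real_Asymp.Real_Asymp"
begin

section \<open>Remainder bounds and optimal truncation\<close>

(* r n z stands for the n-th remainder P z - (\<Sum>k<n. p k / z ^ (k+1)). *)
definition remainder_bound ::
    "(nat \<Rightarrow> complex \<Rightarrow> complex) \<Rightarrow> real \<Rightarrow> real \<Rightarrow> real \<Rightarrow> real \<Rightarrow> real \<Rightarrow> real \<Rightarrow> bool" where
  "remainder_bound r M b \<gamma> a \<sigma> K \<longleftrightarrow>
     (\<forall>\<delta> n z. 0 < \<delta> \<and> \<delta> < pi/2 \<and> z \<in> sector (-pi/2 + \<delta>) (pi/2 - \<delta>) \<and> cmod z > \<sigma> \<longrightarrow>
        cmod (r n z) \<le> K * Mdelta M b \<gamma> \<delta> * fact n / (a ^ n * cmod z ^ (n+1)))"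

lemma remainder_bound_diff:
  assumes "remainder_bound r1 M b \<gamma> a1 \<sigma>1 K1" "remainder_bound r2 M b \<gamma> a2 \<sigma>2 K2"
    and "0 < a1" "0 < a2" "0 \<le> \<sigma>1" "0 \<le> \<sigma>2" "0 \<le> K1" "0 \<le> K2" "0 \<le> M"
  shows "remainder_bound (\<lambda>n z. r1 n z - r2 n z) M b \<gamma> (min a1 a2) (max \<sigma>1 \<sigma>2) (K1 + K2)"
  unfolding remainder_bound_def
proof (intro allI impI)
  fix \<delta> n z
  assume H: "0 < \<delta> \<and> \<delta> < pi/2 \<and> z \<in> sector (-pi/2 + \<delta>) (pi/2 - \<delta>) \<and> max \<sigma>1 \<sigma>2 < cmod z"
  have "0 < cmod z" using H assms by linarith
  define B where "B a = Mdelta M b \<gamma> \<delta> * fact n / (a ^ n * cmod z ^ (n+1))" for a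
  have B_mono: "B ai \<le> B (min a1 a2)" if "ai = a1 \<or> ai = a2" for ai
    unfolding B_def using that assms H \<open>0 < cmod z\<close>
    by (intro divide_left_mono mult_right_mono power_mono mult_pos_pos)
       (auto simp: Mdelta_def)
  have "cmod (r1 n z) \<le> K1 * B a1" "cmod (r2 n z) \<le> K2 * B a2"
    using assms(1,2) H unfolding remainder_bound_def B_def by (auto simp: mult.assoc)
  moreover have "K1 * B a1 \<le> K1 * B (min a1 a2)" "K2 * B a2 \<le> K2 * B (min a1 a2)"
    using B_mono assms by (auto intro: mult_left_mono)
  ultimately have "cmod (r1 n z - r2 n z) \<le> K1 * B (min a1 a2) + K2 * B (min a1 a2)"
    using norm_triangle_ineq4[of "r1 n z" "r2 n z"] by linarith
  then show "cmod (r1 n z - r2 n z)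
      \<le> (K1 + K2) * Mdelta M b \<gamma> \<delta> * fact n / (min a1 a2 ^ n * cmod z ^ (n+1))"
    unfolding B_def by (simp add: distrib_right add_divide_distrib mult.assoc)
qed

lemma fact_div_power_le_exp:
  fixes a r :: real
  assumes a: "a > 0" and r: "r \<ge> 1" and n: "n = nat \<lfloor>a * r / exp 1\<rfloor>"
  shows "fact n / (a ^ n * r ^ (n+1)) \<le> exp (1 - a * r / exp 1)"
proof -
  have ar: "a * r > 0" using a r by simp
  have n_le: "real n \<le> a * r / exp 1" and n_gt: "a * r / exp 1 < real n + 1"
    unfolding n using ar by (simp_all add: of_nat_nat)
  have "fact n / (a ^ n * r ^ (n+1)) \<le> real (n ^ n) / (a ^ n * r ^ (n+1))"
    by (intro divide_right_mono) (use fact_le_power[of n] a r in auto)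
  also have "\<dots> \<le> real (n ^ n) / (a ^ n * r ^ n)"
    using a r by (intro divide_left_mono mult_left_mono) (auto intro: power_increasing)
  also have "\<dots> = (real n / (a * r)) ^ n"
    by (simp add: power_divide power_mult_distrib)
  also have "\<dots> \<le> (1 / exp 1) ^ n"
    using n_le ar by (intro power_mono) (simp_all add: divide_simps mult.commute)
  also have "\<dots> = exp (- real n)"
    by (simp add: exp_minus power_one_over exp_of_nat_mult[symmetric] inverse_eq_divide)
  also have "\<dots> \<le> exp (1 - a * r / exp 1)" using n_gt by simp
  finally show ?thesis .
qed

lemma norm_le_exp_if_remainder_bound:
  assumes bound: "remainder_bound (\<lambda>_. f) M b \<gamma> a \<sigma> K"
    and "a > 0" "K \<ge> 0" "M \<ge> 0" "0 < \<delta>" "\<delta> < pi/2"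
    and "z \<in> sector (-pi/2 + \<delta>) (pi/2 - \<delta>)" "\<sigma> < cmod z" "1 \<le> cmod z"
  shows "cmod (f z) \<le> K * Mdelta M b \<gamma> \<delta> * exp (1 - a * cmod z / exp 1)"
proof -
  define n where "n = nat \<lfloor>a * cmod z / exp 1\<rfloor>"
  have "cmod (f z) \<le> K * Mdelta M b \<gamma> \<delta> * (fact n / (a ^ n * cmod z ^ (n+1)))"
    using bound assms unfolding remainder_bound_def by (simp add: times_divide_eq_right)
  also have "\<dots> \<le> K * Mdelta M b \<gamma> \<delta> * exp (1 - a * cmod z / exp 1)"
    using assms fact_div_power_le_exp[OF \<open>a > 0\<close> \<open>1 \<le> cmod z\<close> n_def]
    by (intro mult_left_mono) (auto simp: Mdelta_def)
  finally show ?thesis .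
qed

section \<open>The bent strip\<close>

(* In the variable w = ln z, the curves |Im (strip_bend \<beta> w)| = pi/2 approach the edges of the
   strip |Im w| < pi/2 at a distance of order exp (-\<beta> * Re w); between them the sector
   estimate can be used with \<delta> of that order. *)
definition strip_bend :: "real \<Rightarrow> complex \<Rightarrow> complex" where
  "strip_bend \<beta> w = w - exp (- (of_real \<beta> * w))"

lemma Re_strip_bend:
  "Re (strip_bend \<beta> w) = Re w - exp (-\<beta> * Re w) * cos (\<beta> * Im w)"
  and Im_strip_bend:
  "Im (strip_bend \<beta> w) = Im w + exp (-\<beta> * Re w) * sin (\<beta> * Im w)"
  by (simp_all add: strip_bend_def Re_exp Im_exp)

lemma continuous_on_strip_bend [continuous_intros]: "continuous_on A (strip_bend \<beta>)"
  unfolding strip_bend_def by (intro continuous_intros)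

lemma holomorphic_on_strip_bend [holomorphic_intros]: "strip_bend \<beta> holomorphic_on A"
  unfolding strip_bend_def by (intro holomorphic_intros)

lemma strip_bend_of_real: "strip_bend \<beta> (of_real u) = of_real (u - exp (-\<beta> * u))"
  by (simp add: strip_bend_def exp_of_real[symmetric])

lemma abs_add_mult_sin:
  fixes \<beta> e v :: real
  assumes "0 < \<beta>" "\<beta> \<le> 1/2" "0 \<le> e" "\<bar>v\<bar> \<le> pi/2"
  shows "\<bar>v + e * sin (\<beta> * v)\<bar> = \<bar>v\<bar> + e * sin (\<beta> * \<bar>v\<bar>)"
proof -
  have "\<beta> * \<bar>v\<bar> \<le> 1/2 * (pi/2)" using assms by (intro mult_mono) auto
  then have "0 \<le> sin (\<beta> * \<bar>v\<bar>)" using assms pi_gt3 by (intro sin_ge_zero) auto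
  then have "0 \<le> e * sin (\<beta> * \<bar>v\<bar>)" using assms by simp
  then show ?thesis by (cases "0 \<le> v") auto
qed

lemma abs_lt_pi_half_minus_margin:
  fixes \<beta> e v :: real
  assumes \<beta>: "0 < \<beta>" "\<beta> \<le> 1/2" and e: "0 < e" "e \<le> 1/2"
    and v: "\<bar>v\<bar> < pi/2" and bent: "\<bar>v + e * sin (\<beta> * v)\<bar> \<le> pi/2"
  shows "\<bar>v\<bar> < pi/2 - e * sin (\<beta> * pi / 4) / 2"
proof -
  have bent_abs: "\<bar>v\<bar> + e * sin (\<beta> * \<bar>v\<bar>) \<le> pi/2"
    using bent abs_add_mult_sin[OF \<beta>, of e v] e v by simp
  have sin_pos: "0 < sin (\<beta> * pi / 4)" using \<beta> pi_gt3 by (intro sin_gt_zero) auto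
  show ?thesis
  proof (cases "\<bar>v\<bar> \<le> pi/4")
    case True
    have "e * sin (\<beta> * pi / 4) \<le> 1/2 * 1" using e sin_pos by (intro mult_mono) auto
    then show ?thesis using True pi_gt3 by linarith
  next
    case False
    have "\<beta> * \<bar>v\<bar> \<le> 1/2 * (pi/2)" using \<beta> v by (intro mult_mono) auto
    moreover have "\<beta> * (pi/4) \<le> \<beta> * \<bar>v\<bar>" using False \<beta> by (intro mult_left_mono) auto
    moreover have "0 \<le> \<beta> * (pi/4)" using \<beta> by simp
    ultimately have "sin (\<beta> * (pi/4)) \<le> sin (\<beta> * \<bar>v\<bar>)"
      by (intro sin_monotone_2pi_le) auto
    then have "e * sin (\<beta> * pi / 4) \<le> e * sin (\<beta> * \<bar>v\<bar>)" using e by (intro mult_left_mono) auto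
    moreover have "0 < e * sin (\<beta> * pi / 4)" using e sin_pos by simp
    ultimately show ?thesis using bent_abs by linarith
  qed
qed

lemma abs_Im_lt_pi_half_if_strip_bend:
  assumes \<beta>: "0 < \<beta>" "\<beta> \<le> 1/2"
    and "\<bar>Im w\<bar> \<le> pi/2" "\<bar>Im (strip_bend \<beta> w)\<bar> \<le> pi/2"
  shows "\<bar>Im w\<bar> < pi/2"
proof (rule ccontr)
  assume "\<not> \<bar>Im w\<bar> < pi/2"
  then have abs_eq: "\<bar>Im w\<bar> = pi/2" using assms by simp
  have "0 < exp (-\<beta> * Re w) * sin (\<beta> * \<bar>Im w\<bar>)"
    unfolding abs_eq using \<beta> pi_gt3 by (intro mult_pos_pos sin_gt_zero) auto
  then have "pi/2 < \<bar>Im (strip_bend \<beta> w)\<bar>"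
    using abs_add_mult_sin[OF \<beta>, of "exp (-\<beta> * Re w)" "Im w"] abs_eq by (simp add: Im_strip_bend)
  then show False using assms by simp
qed

lemma Re_strip_bend_bounds:
  assumes "0 < \<beta>" "\<beta> \<le> 1/2" "\<bar>Im w\<bar> \<le> pi/2" "exp (-\<beta> * Re w) \<le> 1/2"
  shows "Re (strip_bend \<beta> w) \<le> Re w" "Re w - 1/2 \<le> Re (strip_bend \<beta> w)"
proof -
  have "\<bar>\<beta> * Im w\<bar> \<le> 1/2 * (pi/2)" unfolding abs_mult using assms by (intro mult_mono) auto
  then have "0 \<le> cos (\<beta> * Im w)" by (intro cos_ge_zero) auto
  moreover have "exp (-\<beta> * Re w) * cos (\<beta> * Im w) \<le> 1/2 * 1"
    using assms calculation by (intro mult_mono) auto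
  ultimately show "Re (strip_bend \<beta> w) \<le> Re w" "Re w - 1/2 \<le> Re (strip_bend \<beta> w)"
    unfolding Re_strip_bend by auto
qed

lemma ex_decay_threshold:
  fixes \<sigma> \<beta> \<gamma> b s \<alpha> :: real
  assumes "\<sigma> > 0" "\<beta> > 0" "\<beta> * \<gamma> \<le> 1/2" "b > 0" "s > 0" "\<alpha> > 0"
  shows "\<exists>u0. \<forall>u\<ge>u0. \<sigma> < exp u \<and> 1 \<le> exp u \<and> exp (-\<beta> * u) \<le> 1/2 \<and>
            b / (exp (-\<beta> * u) * s / 2) powr \<gamma> \<le> \<alpha> * exp u"
proof -
  define B where "B = b / (s/2) powr \<gamma>"
  have B: "B > 0" unfolding B_def using assms by simp
  define u0 where "u0 = max (max (ln \<sigma> + 1) 0) (max (ln 2 / \<beta>) (2 * ln (B / \<alpha>)))"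
  have "\<sigma> < exp u \<and> 1 \<le> exp u \<and> exp (-\<beta> * u) \<le> 1/2 \<and>
          b / (exp (-\<beta> * u) * s / 2) powr \<gamma> \<le> \<alpha> * exp u" if u: "u \<ge> u0" for u
  proof (intro conjI)
    have "ln \<sigma> < u" using u unfolding u0_def by linarith
    then show "\<sigma> < exp u" using assms by (metis exp_less_cancel_iff exp_ln)
    have u_nonneg: "0 \<le> u" using u unfolding u0_def by linarith
    then show "1 \<le> exp u" by simp
    have "ln 2 \<le> \<beta> * u" using u assms unfolding u0_def by (simp add: divide_le_eq mult.commute)
    then have "2 \<le> exp (\<beta> * u)" by (metis exp_le_cancel_iff exp_ln_iff zero_less_numeral)
    then show "exp (-\<beta> * u) \<le> 1/2" by (simp add: exp_minus field_simps)
    have "(exp (-\<beta> * u) * s / 2) powr \<gamma> = exp (-\<beta> * u) powr \<gamma> * (s/2) powr \<gamma>"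
      by (simp add: powr_mult[symmetric])
    also have "\<dots> = exp (-(\<beta> * \<gamma> * u)) * (s/2) powr \<gamma>"
      by (simp add: exp_powr_real mult_ac)
    finally have powr_eq: "(exp (-\<beta> * u) * s / 2) powr \<gamma> = exp (-(\<beta> * \<gamma> * u)) * (s/2) powr \<gamma>" .
    have "b / (exp (-\<beta> * u) * s / 2) powr \<gamma> = B * exp (\<beta> * \<gamma> * u)"
      unfolding powr_eq B_def using assms by (simp add: exp_minus divide_simps)
    also have "\<dots> \<le> B * exp (u/2)"
      using B mult_right_mono[OF \<open>\<beta> * \<gamma> \<le> 1/2\<close> u_nonneg] by simp
    also have "\<dots> \<le> \<alpha> * exp (u/2) * exp (u/2)"
    proof -
      have "2 * ln (B / \<alpha>) \<le> u" using u unfolding u0_def by linarith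
      then have "exp (ln (B / \<alpha>)) \<le> exp (u/2)" by simp
      then have "B / \<alpha> \<le> exp (u/2)" using B assms by simp
      then show ?thesis using assms by (simp add: divide_le_eq mult.commute)
    qed
    also have "\<dots> = \<alpha> * exp u" by (simp add: mult.assoc exp_add[symmetric])
    finally show "b / (exp (-\<beta> * u) * s / 2) powr \<gamma> \<le> \<alpha> * exp u" .
  qed
  then show ?thesis by blast
qed

lemma norm_comp_exp_le_if_remainder_bound:
  assumes bound: "remainder_bound (\<lambda>_. f) M b \<gamma> a \<sigma> K"
    and a: "a > 0" and K: "K \<ge> 0" and M: "M \<ge> 0" and \<beta>: "0 < \<beta>" "\<beta> \<le> 1/2"
    and large: "\<sigma> < exp (Re w)" "1 \<le> exp (Re w)" and e_le: "exp (-\<beta> * Re w) \<le> 1/2"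
    and exponent_le: "b / (exp (-\<beta> * Re w) * sin (\<beta> * pi / 4) / 2) powr \<gamma>
                        \<le> a / (2 * exp 1) * exp (Re w)"
    and "\<bar>Im w\<bar> < pi/2" "\<bar>Im (strip_bend \<beta> w)\<bar> \<le> pi/2"
  shows "cmod (f (exp w)) \<le> K * M * exp 1 * exp (- (a / (2 * exp 1)) * exp (Re w))"
proof -
  define \<delta> where "\<delta> = exp (-\<beta> * Re w) * sin (\<beta> * pi / 4) / 2"
  define r where "r = exp (Re w)"
  have sin_pos: "0 < sin (\<beta> * pi / 4)" using \<beta> pi_gt3 by (intro sin_gt_zero) auto
  have "exp (-\<beta> * Re w) * sin (\<beta> * pi / 4) \<le> 1/2 * 1"
    using e_le sin_pos by (intro mult_mono) auto
  then have \<delta>: "0 < \<delta>" "\<delta> < pi/2" unfolding \<delta>_def using sin_pos pi_gt3 by auto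
  have "\<bar>Im w\<bar> < pi/2 - \<delta>"
    unfolding \<delta>_def using assms sin_pos
    by (intro abs_lt_pi_half_minus_margin[OF \<beta>]) (auto simp: Im_strip_bend)
  moreover have "Arg (exp w) = Im w" using assms pi_gt3 by (intro Arg_exp) auto
  ultimately have sector: "exp w \<in> sector (-pi/2 + \<delta>) (pi/2 - \<delta>)"
    unfolding sector_def by auto
  have "cmod (f (exp w)) \<le> K * Mdelta M b \<gamma> \<delta> * exp (1 - a * r / exp 1)"
    using norm_le_exp_if_remainder_bound[OF bound a K M \<delta> sector] large unfolding r_def
    by (simp add: norm_exp_eq_Re)
  also have "\<dots> \<le> K * (M * exp (a / (2 * exp 1) * r)) * exp (1 - a * r / exp 1)"
    using assms exponent_le unfolding Mdelta_def \<delta>_def r_def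
    by (intro mult_right_mono mult_left_mono) (auto simp: mult.commute)
  also have "\<dots> = K * M * exp 1 * exp (- (a / (2 * exp 1)) * r)"
    by (simp add: mult_ac exp_add[symmetric] field_simps)
  finally show ?thesis unfolding r_def .
qed

section \<open>A maximum modulus argument on the bent strip\<close>

definition bent_box :: "real \<Rightarrow> real \<Rightarrow> real \<Rightarrow> complex set" where
  "bent_box \<beta> u0 U =
     {w. u0 < Re w \<and> Re w < U \<and> \<bar>Im w\<bar> < pi/2 \<and> \<bar>Im (strip_bend \<beta> w)\<bar> < pi/2}"

lemma open_bent_box: "open (bent_box \<beta> u0 U)"
  unfolding bent_box_def by (intro open_Collect_conj open_Collect_less continuous_intros)

lemma bounded_bent_box: "bounded (bent_box \<beta> u0 U)"
proof -
  have "norm w \<le> \<bar>u0\<bar> + \<bar>U\<bar> + 2" if "w \<in> bent_box \<beta> u0 U" for w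
    using that cmod_le[of w] pi_less_4 unfolding bent_box_def by auto
  then show ?thesis unfolding bounded_iff by blast
qed

lemma closure_bent_box_subset:
  "closure (bent_box \<beta> u0 U) \<subseteq>
     {w. u0 \<le> Re w \<and> Re w \<le> U \<and> \<bar>Im w\<bar> \<le> pi/2 \<and> \<bar>Im (strip_bend \<beta> w)\<bar> \<le> pi/2}"
  by (intro closure_minimal closed_Collect_conj closed_Collect_le continuous_intros)
     (auto simp: bent_box_def)

lemma frontier_bent_box:
  assumes "0 < \<beta>" "\<beta> \<le> 1/2" and "w \<in> frontier (bent_box \<beta> u0 U)"
  shows "u0 \<le> Re w" "Re w \<le> U" "\<bar>Im w\<bar> < pi/2" "\<bar>Im (strip_bend \<beta> w)\<bar> \<le> pi/2"
    and "Re w = u0 \<or> Re w = U \<or> \<bar>Im (strip_bend \<beta> w)\<bar> = pi/2"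
proof -
  have "w \<in> closure (bent_box \<beta> u0 U)" and not_in: "w \<notin> bent_box \<beta> u0 U"
    using assms(3) open_bent_box by (auto simp: frontier_def interior_open)
  then have "w \<in> {w. u0 \<le> Re w \<and> Re w \<le> U \<and> \<bar>Im w\<bar> \<le> pi/2 \<and> \<bar>Im (strip_bend \<beta> w)\<bar> \<le> pi/2}"
    using closure_bent_box_subset by blast
  then show "u0 \<le> Re w" "Re w \<le> U" "\<bar>Im (strip_bend \<beta> w)\<bar> \<le> pi/2"
    and Im_lt: "\<bar>Im w\<bar> < pi/2"
    using abs_Im_lt_pi_half_if_strip_bend[OF assms(1,2), of w] by auto
  with not_in show "Re w = u0 \<or> Re w = U \<or> \<bar>Im (strip_bend \<beta> w)\<bar> = pi/2"
    unfolding bent_box_def by auto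
qed

lemma Re_diff_mult_exp:
  "Re ((p - of_real U) * exp p) = exp (Re p) * ((Re p - U) * cos (Im p) - Im p * sin (Im p))"
  by (simp add: Re_exp Im_exp algebra_simps)

lemma majorant_boundary_estimate:
  fixes \<rho> \<tau> u u0 U \<alpha> c :: real
  assumes \<rho>: "\<rho> \<le> u" "u - 1/2 \<le> \<rho>" and u: "u0 \<le> u" "u \<le> U" and \<tau>: "\<bar>\<tau>\<bar> \<le> pi/2"
    and "\<alpha> > 0" and boundary: "u = u0 \<or> u = U \<or> \<bar>\<tau>\<bar> = pi/2"
  shows "c - \<alpha> * exp u
           \<le> c + \<alpha>/pi * exp u0 * (U - u0 + 3) + \<alpha>/pi * exp \<rho> * ((\<rho> - U) * cos \<tau> - \<tau> * sin \<tau>)"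
proof -
  define X where "X = (\<rho> - U) * cos \<tau> - \<tau> * sin \<tau>"
  define L where "L = U - u0 + 3"
  have L: "0 \<le> L" using u unfolding L_def by simp
  have sin_abs: "\<tau> * sin \<tau> = \<bar>\<tau>\<bar> * sin \<bar>\<tau>\<bar>" by (cases "0 \<le> \<tau>") auto
  have "0 \<le> cos \<tau>" using \<tau> by (intro cos_ge_zero) auto
  then have "\<rho> - U \<le> (\<rho> - U) * cos \<tau>"
    using \<rho> u mult_left_mono_neg[of "cos \<tau>" 1 "\<rho> - U"] by simp
  moreover have "\<bar>\<tau>\<bar> * sin \<bar>\<tau>\<bar> \<le> pi/2 * 1"
    using \<tau> pi_gt3 by (intro mult_mono sin_ge_zero) auto
  ultimately have X_ge: "\<rho> - U - pi/2 \<le> X" unfolding X_def sin_abs by linarith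
  have exp_\<rho>: "exp \<rho> \<le> exp u" using \<rho> by simp
  have "- (pi * exp u) - exp u0 * L \<le> exp \<rho> * X"
    using boundary
  proof (elim disjE)
    assume "u = u0"
    then have "exp \<rho> * - L \<le> exp \<rho> * X" "exp \<rho> * L \<le> exp u0 * L"
      using X_ge \<rho> exp_\<rho> L pi_less_4 unfolding L_def by (auto intro: mult_right_mono)
    moreover have "0 \<le> pi * exp u" by simp
    ultimately show ?thesis by linarith
  next
    assume "u = U"
    then have "exp \<rho> * - pi \<le> exp \<rho> * X" using X_ge \<rho> pi_gt3 by (intro mult_left_mono) auto
    moreover have "exp \<rho> * - pi = - (pi * exp \<rho>)" "pi * exp \<rho> \<le> pi * exp u" "0 \<le> exp u0 * L"
      using exp_\<rho> L by simp_all
    ultimately show ?thesis by linarith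
  next
    assume abs_\<tau>: "\<bar>\<tau>\<bar> = pi/2"
    have "cos \<tau> = 0" using cos_abs_real[of \<tau>] unfolding abs_\<tau> by simp
    then have "exp \<rho> * X = - (pi * exp \<rho>) / 2" unfolding X_def sin_abs abs_\<tau> by simp
    moreover have "pi * exp \<rho> \<le> pi * exp u" "0 \<le> pi * exp \<rho>" "0 \<le> exp u0 * L"
      using exp_\<rho> L by simp_all
    ultimately show ?thesis by linarith
  qed
  then have "\<alpha>/pi * (- (pi * exp u) - exp u0 * L) \<le> \<alpha>/pi * (exp \<rho> * X)"
    using \<open>\<alpha> > 0\<close> by (intro mult_left_mono) auto
  moreover have "\<alpha>/pi * (- (pi * exp u) - exp u0 * L) = - (\<alpha> * exp u) - \<alpha>/pi * exp u0 * L"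
    by (simp add: field_simps)
  ultimately show ?thesis unfolding X_def[symmetric] L_def[symmetric] by (simp add: mult.assoc)
qed

lemma norm_le_majorant_at_real:
  fixes F :: "complex \<Rightarrow> complex"
  assumes holF: "F holomorphic_on {w. \<bar>Im w\<bar> < pi/2}"
    and \<beta>: "0 < \<beta>" "\<beta> \<le> 1/2" and u0: "exp (-\<beta> * u0) \<le> 1/2"
    and decay: "\<And>w. u0 \<le> Re w \<Longrightarrow> \<bar>Im w\<bar> < pi/2 \<Longrightarrow> \<bar>Im (strip_bend \<beta> w)\<bar> \<le> pi/2
                  \<Longrightarrow> cmod (F w) \<le> C * exp (-\<alpha> * exp (Re w))"
    and "C > 0" "\<alpha> > 0" and u: "u0 < u" "u < U"
  defines "\<rho> \<equiv> u - exp (-\<beta> * u)"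
  shows "cmod (F (of_real u))
           \<le> exp (ln C + \<alpha>/pi * exp u0 * (U - u0 + 3) + \<alpha>/pi * exp \<rho> * (\<rho> - U))"
proof -
  define c where "c = ln C + \<alpha>/pi * exp u0 * (U - u0 + 3)"
  \<comment> \<open>On the curves |Im (strip_bend \<beta> w)| = pi/2, and on the side Re w = U, the real part of
    (strip_bend \<beta> w - U) * exp (strip_bend \<beta> w) is at least -pi exp (Re w); the factor \<alpha>/pi turns
    this into the decay rate of F, and c covers the side Re w = u0.\<close>
  define H where "H w = of_real c + of_real (\<alpha>/pi) * (strip_bend \<beta> w - of_real U) * exp (strip_bend \<beta> w)"
    for w
  define Q where "Q w = F w * exp (- H w)" for w
  define D where "D = bent_box \<beta> u0 U"
  have Re_H: "Re (H w) = c + \<alpha>/pi * Re ((strip_bend \<beta> w - of_real U) * exp (strip_bend \<beta> w))"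
    for w
    unfolding H_def by (simp add: mult.assoc)
  have norm_Q: "cmod (Q w) = cmod (F w) / exp (Re (H w))" for w
    unfolding Q_def by (simp add: norm_mult norm_exp_eq_Re exp_minus divide_inverse norm_inverse)
  have holQ_strip: "Q holomorphic_on {w. \<bar>Im w\<bar> < pi/2}"
    unfolding Q_def H_def by (intro holomorphic_intros holF)
  have closure_D: "closure D \<subseteq> {w. \<bar>Im w\<bar> < pi/2}"
    using closure_bent_box_subset abs_Im_lt_pi_half_if_strip_bend[OF \<beta>] unfolding D_def by fastforce
  then have holQ: "Q holomorphic_on interior D"
    using closure_subset[of D] interior_subset[of D] by (blast intro: holomorphic_on_subset[OF holQ_strip])
  have contQ: "continuous_on (closure D) Q"
    using holomorphic_on_imp_continuous_on[OF holQ_strip] closure_D by (rule continuous_on_subset)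
  have "cmod (Q z) \<le> 1" if z: "z \<in> frontier D" for z
  proof -
    note z_facts = frontier_bent_box[OF \<beta> z[unfolded D_def]]
    have "exp (-\<beta> * Re z) \<le> exp (-\<beta> * u0)" using z_facts \<beta> by simp
    then have "exp (-\<beta> * Re z) \<le> 1/2" using u0 by linarith
    then have "Re (strip_bend \<beta> z) \<le> Re z" "Re z - 1/2 \<le> Re (strip_bend \<beta> z)"
      using Re_strip_bend_bounds[OF \<beta>, of z] z_facts by auto
    then have "ln C - \<alpha> * exp (Re z) \<le> Re (H z)"
      unfolding Re_H c_def Re_diff_mult_exp mult.assoc[symmetric] using z_facts \<open>\<alpha> > 0\<close>
      by (intro majorant_boundary_estimate) auto
    moreover have "cmod (F z) \<le> exp (ln C - \<alpha> * exp (Re z))"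
      using decay[of z] z_facts \<open>C > 0\<close> by (simp add: exp_diff exp_minus field_simps)
    ultimately have "cmod (F z) \<le> exp (Re (H z))" by (meson exp_le_cancel_iff order.trans)
    then show ?thesis unfolding norm_Q by simp
  qed
  moreover have "of_real u \<in> D" using u unfolding D_def bent_box_def by (simp add: strip_bend_of_real)
  ultimately have "cmod (Q (of_real u)) \<le> 1"
    using maximum_modulus_frontier[OF holQ contQ bounded_bent_box[of \<beta> u0 U, folded D_def]] by blast
  moreover have "Re (H (of_real u)) = ln C + \<alpha>/pi * exp u0 * (U - u0 + 3) + \<alpha>/pi * exp \<rho> * (\<rho> - U)"
    unfolding Re_H c_def \<rho>_def strip_bend_of_real Re_diff_mult_exp by simp
  ultimately show ?thesis unfolding norm_Q by simp
qed

lemma nonpos_if_le_exp_affine: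
  fixes c d E :: real
  assumes "d > 0" and le: "\<And>U. u < U \<Longrightarrow> c \<le> exp (E - d * U)"
  shows "c \<le> 0"
proof (rule tendsto_le[OF trivial_limit_at_top_linorder _ tendsto_const])
  show "((\<lambda>U. exp (E - d * U)) \<longlongrightarrow> 0) at_top" using \<open>d > 0\<close> by real_asymp
  show "\<forall>\<^sub>F U in at_top. c \<le> exp (E - d * U)"
    using eventually_gt_at_top[of u] by eventually_elim (rule le)
qed

lemma zero_at_real_if_decay_on_bent_strip:
  fixes F :: "complex \<Rightarrow> complex"
  assumes holF: "F holomorphic_on {w. \<bar>Im w\<bar> < pi/2}"
    and \<beta>: "0 < \<beta>" "\<beta> \<le> 1/2" and u0: "exp (-\<beta> * u0) \<le> 1/2"
    and decay: "\<And>w. u0 \<le> Re w \<Longrightarrow> \<bar>Im w\<bar> < pi/2 \<Longrightarrow> \<bar>Im (strip_bend \<beta> w)\<bar> \<le> pi/2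
                  \<Longrightarrow> cmod (F w) \<le> C * exp (-\<alpha> * exp (Re w))"
    and "C > 0" "\<alpha> > 0" and u: "u0 + 1 \<le> u"
  shows "F (of_real u) = 0"
proof -
  define \<rho> where "\<rho> = u - exp (-\<beta> * u)"
  have "exp (-\<beta> * u) \<le> exp (-\<beta> * u0)" using u \<beta> by simp
  then have "u0 < \<rho>" unfolding \<rho>_def using u u0 by linarith
  then have d: "0 < \<alpha>/pi * (exp \<rho> - exp u0)" using \<open>\<alpha> > 0\<close> by simp
  have "cmod (F (of_real u)) \<le> 0"
  proof (rule nonpos_if_le_exp_affine[OF d])
    fix U assume "u < U"
    then have "cmod (F (of_real u))
               \<le> exp (ln C + \<alpha>/pi * exp u0 * (U - u0 + 3) + \<alpha>/pi * exp \<rho> * (\<rho> - U))"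
      unfolding \<rho>_def using u by (intro norm_le_majorant_at_real[OF holF \<beta> u0 decay]) (use assms in auto)
    also have "\<dots> = exp ((ln C + \<alpha>/pi * (exp u0 * (3 - u0) + exp \<rho> * \<rho>))
                         - \<alpha>/pi * (exp \<rho> - exp u0) * U)"
      by (simp add: field_simps)
    finally show "cmod (F (of_real u))
                  \<le> exp ((ln C + \<alpha>/pi * (exp u0 * (3 - u0) + exp \<rho> * \<rho>))
                         - \<alpha>/pi * (exp \<rho> - exp u0) * U)" .
  qed
  then show ?thesis by simp
qed

lemma islimpt_ray: "(of_real (X + 1) :: complex) islimpt of_real ` {X<..}"
proof (rule islimpt_isCont_image)
  show "X + 1 islimpt {X<..}" by (intro open_imp_islimpt) auto
  show "\<forall>\<^sub>F x in at (X + 1). complex_of_real x \<noteq> complex_of_real (X + 1)"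
    by (simp add: eventually_at_filter del: of_real_add)
qed auto

lemma zero_on_right_half_plane_if_zero_on_ray:
  assumes holf: "f holomorphic_on {z. 0 < Re z}" and "0 \<le> X"
    and ray: "\<And>x. X < x \<Longrightarrow> f (of_real x) = 0" and "0 < Re z"
  shows "f z = 0"
proof (rule analytic_continuation[OF holf open_halfspace_Re_gt connected_halfspace_Re_gt])
  show "of_real ` {X<..} \<subseteq> {z. 0 < Re z}" using \<open>0 \<le> X\<close> by auto
  show "of_real (X + 1) \<in> {z. 0 < Re z}" using \<open>0 \<le> X\<close> by simp
qed (use islimpt_ray ray \<open>0 < Re z\<close> in auto)

lemma sector_minus_pi_half_pi_half: "sector (-pi/2) (pi/2) = {z. 0 < Re z}"
proof (rule set_eqI)
  fix z :: complex
  have "(- pi / 2 < Arg z \<and> Arg z < pi / 2) \<longleftrightarrow> \<bar>Arg z\<bar> < pi / 2" by linarith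
  moreover have "0 < Re z \<Longrightarrow> z \<noteq> 0" by auto
  ultimately show "z \<in> sector (-pi/2) (pi/2) \<longleftrightarrow> z \<in> {z. 0 < Re z}"
    unfolding sector_def mem_Collect_eq using Arg_Re_pos[of z] by blast
qed

lemma zero_if_remainder_bound:
  assumes holf: "f holomorphic_on {z. 0 < Re z}" and bound: "remainder_bound (\<lambda>_. f) M b \<gamma> a \<sigma> K"
    and a: "a > 0" and K: "K > 0" and M: "M > 0"
    and "b > 0" "\<gamma> > 0" "\<sigma> > 0" and "0 < Re z"
  shows "f z = 0"
proof -
  define \<beta> where "\<beta> = 1 / (2 * \<gamma> + 2)"
  define \<alpha> where "\<alpha> = a / (2 * exp 1)"
  have \<beta>: "0 < \<beta>" "\<beta> \<le> 1/2" "\<beta> * \<gamma> \<le> 1/2"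
    unfolding \<beta>_def using \<open>\<gamma> > 0\<close> by (auto simp: divide_simps)
  have "0 < sin (\<beta> * pi / 4)" using \<beta> pi_gt3 by (intro sin_gt_zero) auto
  then obtain u0 where u0: "\<And>u. u0 \<le> u \<Longrightarrow> \<sigma> < exp u \<and> 1 \<le> exp u \<and> exp (-\<beta> * u) \<le> 1/2 \<and>
            b / (exp (-\<beta> * u) * sin (\<beta> * pi / 4) / 2) powr \<gamma> \<le> \<alpha> * exp u"
    using ex_decay_threshold[of \<sigma> \<beta> \<gamma> b _ \<alpha>] assms \<beta> a unfolding \<alpha>_def by auto
  have "exp ` {w. \<bar>Im w\<bar> < pi/2} \<subseteq> {z. 0 < Re z}"
    by (auto simp: Re_exp intro!: mult_pos_pos cos_gt_zero_pi)
  then have holF: "(\<lambda>w. f (exp w)) holomorphic_on {w. \<bar>Im w\<bar> < pi/2}"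
    using holomorphic_on_compose_gen[OF holomorphic_on_exp holf] by (simp add: comp_def)
  have decay: "cmod (f (exp w)) \<le> K * M * exp 1 * exp (-\<alpha> * exp (Re w))"
    if "u0 \<le> Re w" "\<bar>Im w\<bar> < pi/2" "\<bar>Im (strip_bend \<beta> w)\<bar> \<le> pi/2" for w
    using norm_comp_exp_le_if_remainder_bound[OF bound] u0[OF that(1)] that a K M \<beta>
    unfolding \<alpha>_def by auto
  have "f (of_real x) = 0" if "exp (u0 + 1) < x" for x
  proof -
    have "0 < x" using that by (metis exp_gt_zero order.strict_trans)
    then have "u0 + 1 \<le> ln x" using that by (simp add: ln_ge_iff)
    then have "f (exp (of_real (ln x))) = 0"
      by (intro zero_at_real_if_decay_on_bent_strip[OF holF \<beta>(1,2) _ decay])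
         (use u0[of u0] a K M in \<open>auto simp: \<alpha>_def\<close>)
    then show ?thesis using \<open>0 < x\<close> by (simp add: exp_of_real)
  qed
  then show ?thesis
    by (intro zero_on_right_half_plane_if_zero_on_ray[OF holf _ _ \<open>0 < Re z\<close>, of "exp (u0 + 1)"])
       auto
qed

theorem mainTheorem2:
  fixes M b \<gamma> :: real and p :: "nat \<Rightarrow> complex" and P1 P2 :: "complex \<Rightarrow> complex"
  assumes "M > 0" and "b > 0" and "\<gamma> > 0"
    and "P1 holomorphic_on sector (-pi/2) (pi/2)"
    and "P2 holomorphic_on sector (-pi/2) (pi/2)"
    and "\<exists>a \<sigma> K. a > 0 \<and> \<sigma> > 0 \<and> K > 0 \<and>
          (\<forall>\<delta> n z. 0 < \<delta> \<and> \<delta> < pi/2 \<and> z \<in> sector (-pi/2 + \<delta>) (pi/2 - \<delta>) \<and> cmod z > \<sigma> \<longrightarrow>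
             cmod (P1 z - (\<Sum>k<n. p k / z ^ (k+1)))
               \<le> K * Mdelta M b \<gamma> \<delta> * fact n / (a ^ n * cmod z ^ (n+1)))"
    and "\<exists>a \<sigma> K. a > 0 \<and> \<sigma> > 0 \<and> K > 0 \<and>
          (\<forall>\<delta> n z. 0 < \<delta> \<and> \<delta> < pi/2 \<and> z \<in> sector (-pi/2 + \<delta>) (pi/2 - \<delta>) \<and> cmod z > \<sigma> \<longrightarrow>
             cmod (P2 z - (\<Sum>k<n. p k / z ^ (k+1)))
               \<le> K * Mdelta M b \<gamma> \<delta> * fact n / (a ^ n * cmod z ^ (n+1)))"
  shows "\<forall>z \<in> sector (-pi/2) (pi/2). P1 z = P2 z"
proof -
  define S where "S n z = (\<Sum>k<n. p k / z ^ (k+1))" for n z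
  obtain a1 \<sigma>1 K1 where "a1 > 0" "\<sigma>1 > 0" "K1 > 0"
    and bound1: "remainder_bound (\<lambda>n z. P1 z - S n z) M b \<gamma> a1 \<sigma>1 K1"
    using assms(6) unfolding remainder_bound_def S_def by blast
  obtain a2 \<sigma>2 K2 where "a2 > 0" "\<sigma>2 > 0" "K2 > 0"
    and bound2: "remainder_bound (\<lambda>n z. P2 z - S n z) M b \<gamma> a2 \<sigma>2 K2"
    using assms(7) unfolding remainder_bound_def S_def by blast
  have bound: "remainder_bound (\<lambda>_ z. P1 z - P2 z) M b \<gamma> (min a1 a2) (max \<sigma>1 \<sigma>2) (K1 + K2)"
    using remainder_bound_diff[OF bound1 bound2] assms \<open>a1 > 0\<close> \<open>a2 > 0\<close>
      \<open>\<sigma>1 > 0\<close> \<open>\<sigma>2 > 0\<close> \<open>K1 > 0\<close> \<open>K2 > 0\<close> by simp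
  have hol: "(\<lambda>z. P1 z - P2 z) holomorphic_on {z. 0 < Re z}"
    using assms(4,5) unfolding sector_minus_pi_half_pi_half by (intro holomorphic_intros)
  have "P1 z - P2 z = 0" if "0 < Re z" for z
    using zero_if_remainder_bound[OF hol bound] that assms \<open>a1 > 0\<close> \<open>a2 > 0\<close>
      \<open>\<sigma>1 > 0\<close> \<open>K1 > 0\<close> \<open>K2 > 0\<close> by simp
  then show ?thesis unfolding sector_minus_pi_half_pi_half by simp
qed

end
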